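(* For every locally consistent maximal P2P system $PS$, the set $MaxWM(PS)$ of maximal weak models of $PS$ is nonempty.
   Context: Peer atoms: a peer identifier is a positive integer; a peer atom is $i\!:\!p(t_1,\dots,t_k)$ with $i$ a peer identifier, $p$ a predicate and $t_j$ terms; $i\!:\!p$ is a peer predicate. A literal is an atom $A$ or its negation-as-failure $not\ A$. Built-in atoms are $X\,\theta\,Y$ with $\theta\in\{<,>,\le,\ge,=,\neq\}$. Rules (all safe): a standard rule $H\leftarrow \mathcal B$ with $H$ a peer atom and $\mathcal B$ a conjunction of peer literals and built-ins; an integrity constraint $\leftarrow \mathcal B$; a maximal mapping rule $i\!:\!h(X) \leftharpoonup j\!:\!(p_1(X_1),\dots,p_m(X_m),\varphi)$ with $i\neq j$; a minimal mapping rule, identical but written with $\leftharpoondown$. A peer $P_i=\langle D_i,LP_i,MP_i,IC_i\rangle$ consists of a finite set $D_i$ of ground atoms with identifier $i$, a finite set $LP_i$ of standard rules all of whose atoms have identifier $i$, a finite set $MP_i$ of mapping rules with head identifier $i$, and a finite set $IC_i$ of integrity constraints over atoms with identifier $i$. A P2P system is a set $PS=\{P_1,\dots,P_n\}$ of peers in which every source identifier of a mapping rule lies in $[1..n]$; $D,LP,MP,IC$ are the unions of the components, and $PS$ is identified with $D\cup LP\cup MP\cup IC$. A maximal P2P system is one all of whose mapping rules are maximal. A predicate is derived if it heads a standard rule, a mapping predicate if it heads a mapping rule, base otherwise; each predicate has exactly one type and each mapping predicate heads exactly one mapping rule. Semantics: an interpretation is a set of ground peer atoms; $A$ true iff $A\in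 M$, $not\ A$ true iff $A\notin M$; a standard rule is satisfied iff its body is false or its head true; a constraint iff its body is false. $MM(\Pi)$ is the set of inclusion-minimal models of a program $\Pi$. The stable models $SM(\Pi)$ of a program $\Pi$ are the interpretations $M$ that are the minimal model of the Gelfond–Lifschitz reduct $\Pi^M$ (remove from $ground(\Pi)$ rules containing $not\ A$ with $A\in M$, then delete all negative literals). A peer $P_i$ is locally consistent if $SM(D_i\cup LP_i\cup IC_i)\neq\emptyset$; a P2P system is locally consistent if all its peers are. $St(r)$ turns a mapping rule with head $H$ and body $\mathcal B$ into $H\leftarrow\mathcal B$. An interpretation $M$ is a weak model of $PS$ if $\{M\}=MM(St(PS^M))$, where $PS^M$ is obtained from $ground(PS)$ by removing every rule whose body contains $not\ A$ with $A\in M$, deleting negative literals from the remaining rules, and removing every ground mapping rule whose head is not in $M$. $M[MP]$ is the set of atoms of $M$ with a mapping predicate. For weak models, $M\sqsupseteq_{Max}N$ iff $M[MP]\supseteq N[MP]$, and $M\sqsupset_{Max}N$ iff $M\sqsupseteq_{Max}N$ and not $N\sqsupseteq_{Max}M$. A weak model $M$ is maximal if there is no weak model $N$ with $N\sqsupset_{Max}M$; $MaxWM(PS)$ is the set of maximal weak models. *)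

theory Defs
  imports Main
begin

datatype ('c,'v) trm = Const 'c | Var 'v

datatype ('p,'c,'v) atom = Atom (aid: nat) (apred: 'p) (aargs: "('c,'v) trm list")

datatype ('p,'c) gatom = GAtom (gid: nat) (gpred: 'p) (gargs: "'c list")

datatype cmp = Lt | Gt | Le | Ge | Eq | Neq

datatype ('c,'v) builtin = BI cmp "('c,'v) trm" "('c,'v) trm"

datatype ('p,'c,'v) lit = Pos "('p,'c,'v) atom" | Neg "('p,'c,'v) atom" | Bin "('c,'v) builtin"

text \<open>Rules: standard rule H <- B, integrity constraint <- B,
  maximal mapping rule  i:h(X) <-max- j:(p1(X1),...,pm(Xm), phi),
  minimal mapping rule  i:h(X) <-min- j:(p1(X1),...,pm(Xm), phi).\<close>
datatype ('p,'c,'v) rule =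
    Std "('p,'c,'v) atom" "('p,'c,'v) lit list"
  | Constr "('p,'c,'v) lit list"
  | MaxMap "('p,'c,'v) atom" nat "('p,'c,'v) atom list" "('c,'v) builtin list"
  | MinMap "('p,'c,'v) atom" nat "('p,'c,'v) atom list" "('c,'v) builtin list"

record ('p,'c,'v) peer =
  pD  :: "('p,'c) gatom set"
  pLP :: "('p,'c,'v) rule set"
  pMP :: "('p,'c,'v) rule set"
  pIC :: "('p,'c,'v) rule set"

text \<open>A P2P system {P1,...,Pn} is a list; peer i (1 <= i <= n) is the (i-1)-th element.\<close>
type_synonym ('p,'c,'v) p2p = "('p,'c,'v) peer list"

definition peer_of :: "('p,'c,'v) p2p \<Rightarrow> nat \<Rightarrow> ('p,'c,'v) peer" where
  "peer_of PS i = PS ! (i - 1)"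

definition peer_ids :: "('p,'c,'v) p2p \<Rightarrow> nat set" where
  "peer_ids PS = {1..length PS}"

definition sysD :: "('p,'c,'v) p2p \<Rightarrow> ('p,'c) gatom set" where
  "sysD PS = (\<Union>i\<in>peer_ids PS. pD (peer_of PS i))"
definition sysLP :: "('p,'c,'v) p2p \<Rightarrow> ('p,'c,'v) rule set" where
  "sysLP PS = (\<Union>i\<in>peer_ids PS. pLP (peer_of PS i))"
definition sysMP :: "('p,'c,'v) p2p \<Rightarrow> ('p,'c,'v) rule set" where
  "sysMP PS = (\<Union>i\<in>peer_ids PS. pMP (peer_of PS i))"
definition sysIC :: "('p,'c,'v) p2p \<Rightarrow> ('p,'c,'v) rule set" where
  "sysIC PS = (\<Union>i\<in>peer_ids PS. pIC (peer_of PS i))"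

fun vars_trm :: "('c,'v) trm \<Rightarrow> 'v set" where
  "vars_trm (Const c) = {}" | "vars_trm (Var v) = {v}"

definition vars_atom :: "('p,'c,'v) atom \<Rightarrow> 'v set" where
  "vars_atom a = (\<Union>t\<in>set (aargs a). vars_trm t)"

fun vars_bi :: "('c,'v) builtin \<Rightarrow> 'v set" where
  "vars_bi (BI _ s t) = vars_trm s \<union> vars_trm t"

fun vars_lit :: "('p,'c,'v) lit \<Rightarrow> 'v set" where
  "vars_lit (Pos a) = vars_atom a" | "vars_lit (Neg a) = vars_atom a" | "vars_lit (Bin b) = vars_bi b"

definition pos_atoms :: "('p,'c,'v) lit list \<Rightarrow> ('p,'c,'v) atom set" where
  "pos_atoms B = {a. Pos a \<in> set B}"
definition neg_atoms :: "('p,'c,'v) lit list \<Rightarrow> ('p,'c,'v) atom set" where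
  "neg_atoms B = {a. Neg a \<in> set B}"
definition builtins :: "('p,'c,'v) lit list \<Rightarrow> ('c,'v) builtin set" where
  "builtins B = {b. Bin b \<in> set B}"

fun safe :: "('p,'c,'v) rule \<Rightarrow> bool" where
  "safe (Std h B) = (vars_atom h \<union> (\<Union>l\<in>set B. vars_lit l) \<subseteq> (\<Union>a\<in>pos_atoms B. vars_atom a))"
| "safe (Constr B) = ((\<Union>l\<in>set B. vars_lit l) \<subseteq> (\<Union>a\<in>pos_atoms B. vars_atom a))"
| "safe (MaxMap h j as phi) = (vars_atom h \<union> (\<Union>b\<in>set phi. vars_bi b) \<subseteq> (\<Union>a\<in>set as. vars_atom a))"
| "safe (MinMap h j as phi) = (vars_atom h \<union> (\<Union>b\<in>set phi. vars_bi b) \<subseteq> (\<Union>a\<in>set as. vars_atom a))"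

fun rule_atoms :: "('p,'c,'v) rule \<Rightarrow> ('p,'c,'v) atom set" where
  "rule_atoms (Std h B) = insert h (pos_atoms B \<union> neg_atoms B)"
| "rule_atoms (Constr B) = pos_atoms B \<union> neg_atoms B"
| "rule_atoms (MaxMap h j as phi) = insert h (set as)"
| "rule_atoms (MinMap h j as phi) = insert h (set as)"

fun is_std :: "('p,'c,'v) rule \<Rightarrow> bool" where
  "is_std (Std _ _) = True" | "is_std _ = False"
fun is_constr :: "('p,'c,'v) rule \<Rightarrow> bool" where
  "is_constr (Constr _) = True" | "is_constr _ = False"
fun is_mapping :: "('p,'c,'v) rule \<Rightarrow> bool" where
  "is_mapping (MaxMap _ _ _ _) = True" | "is_mapping (MinMap _ _ _ _) = True" | "is_mapping _ = False"
fun is_max_mapping :: "('p,'c,'v) rule \<Rightarrow> bool" where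
  "is_max_mapping (MaxMap _ _ _ _) = True" | "is_max_mapping _ = False"

fun wf_mapping :: "nat \<Rightarrow> nat \<Rightarrow> ('p,'c,'v) rule \<Rightarrow> bool" where
  "wf_mapping n i (MaxMap h j as phi) = (aid h = i \<and> j \<noteq> i \<and> j \<in> {1..n} \<and> (\<forall>a\<in>set as. aid a = j))"
| "wf_mapping n i (MinMap h j as phi) = (aid h = i \<and> j \<noteq> i \<and> j \<in> {1..n} \<and> (\<forall>a\<in>set as. aid a = j))"
| "wf_mapping n i _ = False"

definition wf_peer :: "nat \<Rightarrow> nat \<Rightarrow> ('p,'c,'v) peer \<Rightarrow> bool" where
  "wf_peer n i P \<longleftrightarrow>
     finite (pD P) \<and> finite (pLP P) \<and> finite (pMP P) \<and> finite (pIC P) \<and>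
     (\<forall>a\<in>pD P. gid a = i) \<and>
     (\<forall>r\<in>pLP P. is_std r \<and> (\<forall>a\<in>rule_atoms r. aid a = i)) \<and>
     (\<forall>r\<in>pMP P. wf_mapping n i r) \<and>
     (\<forall>r\<in>pIC P. is_constr r \<and> (\<forall>a\<in>rule_atoms r. aid a = i)) \<and>
     (\<forall>r\<in>pLP P \<union> pMP P \<union> pIC P. safe r)"

fun head_pp :: "('p,'c,'v) rule \<Rightarrow> (nat \<times> 'p) option" where
  "head_pp (Std h _) = Some (aid h, apred h)"
| "head_pp (Constr _) = None"
| "head_pp (MaxMap h _ _ _) = Some (aid h, apred h)"
| "head_pp (MinMap h _ _ _) = Some (aid h, apred h)"

definition derived_preds :: "('p,'c,'v) p2p \<Rightarrow> (nat \<times> 'p) set" where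
  "derived_preds PS = {q. \<exists>r\<in>sysLP PS. head_pp r = Some q}"

definition mapping_preds :: "('p,'c,'v) p2p \<Rightarrow> (nat \<times> 'p) set" where
  "mapping_preds PS = {q. \<exists>r\<in>sysMP PS. head_pp r = Some q}"

definition wf_system :: "('p,'c,'v) p2p \<Rightarrow> bool" where
  "wf_system PS \<longleftrightarrow>
     (\<forall>i\<in>peer_ids PS. wf_peer (length PS) i (peer_of PS i)) \<and>
     derived_preds PS \<inter> mapping_preds PS = {} \<and>
     (\<forall>q\<in>mapping_preds PS. \<exists>!r. r \<in> sysMP PS \<and> head_pp r = Some q)"

definition maximal_system :: "('p,'c,'v) p2p \<Rightarrow> bool" where
  "maximal_system PS \<longleftrightarrow> (\<forall>r\<in>sysMP PS. is_max_mapping r)"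

text \<open>Ground rule: optional head (None for constraints), positive body atoms,
  negated body atoms, truth value of the (ground) built-in atoms, and a flag
  marking ground mapping rules.\<close>
datatype ('p,'c) grule =
  GR (ghead: "('p,'c) gatom option") (gpos: "('p,'c) gatom list") (gneg: "('p,'c) gatom list")
     (gbi: bool) (gmap: bool)

fun inst_trm :: "('v \<Rightarrow> 'c) \<Rightarrow> ('c,'v) trm \<Rightarrow> 'c" where
  "inst_trm \<sigma> (Const c) = c" | "inst_trm \<sigma> (Var v) = \<sigma> v"

definition inst_atom :: "('v \<Rightarrow> 'c) \<Rightarrow> ('p,'c,'v) atom \<Rightarrow> ('p,'c) gatom" where
  "inst_atom \<sigma> a = GAtom (aid a) (apred a) (map (inst_trm \<sigma>) (aargs a))"

fun eval_cmp :: "cmp \<Rightarrow> 'c::linorder \<Rightarrow> 'c \<Rightarrow> bool" where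
  "eval_cmp Lt x y = (x < y)" | "eval_cmp Gt x y = (x > y)"
| "eval_cmp Le x y = (x \<le> y)" | "eval_cmp Ge x y = (x \<ge> y)"
| "eval_cmp Eq x y = (x = y)" | "eval_cmp Neq x y = (x \<noteq> y)"

fun eval_bi :: "('v \<Rightarrow> 'c::linorder) \<Rightarrow> ('c,'v) builtin \<Rightarrow> bool" where
  "eval_bi \<sigma> (BI \<theta> s t) = eval_cmp \<theta> (inst_trm \<sigma> s) (inst_trm \<sigma> t)"

definition pos_list :: "('p,'c,'v) lit list \<Rightarrow> ('p,'c,'v) atom list" where
  "pos_list B = concat (map (\<lambda>l. case l of Pos a \<Rightarrow> [a] | _ \<Rightarrow> []) B)"
definition neg_list :: "('p,'c,'v) lit list \<Rightarrow> ('p,'c,'v) atom list" where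
  "neg_list B = concat (map (\<lambda>l. case l of Neg a \<Rightarrow> [a] | _ \<Rightarrow> []) B)"
definition bi_list :: "('p,'c,'v) lit list \<Rightarrow> ('c,'v) builtin list" where
  "bi_list B = concat (map (\<lambda>l. case l of Bin b \<Rightarrow> [b] | _ \<Rightarrow> []) B)"

fun ground_rule :: "('v \<Rightarrow> 'c::linorder) \<Rightarrow> ('p,'c,'v) rule \<Rightarrow> ('p,'c) grule" where
  "ground_rule \<sigma> (Std h B) =
     GR (Some (inst_atom \<sigma> h)) (map (inst_atom \<sigma>) (pos_list B)) (map (inst_atom \<sigma>) (neg_list B))
        (list_all (eval_bi \<sigma>) (bi_list B)) False"
| "ground_rule \<sigma> (Constr B) =
     GR None (map (inst_atom \<sigma>) (pos_list B)) (map (inst_atom \<sigma>) (neg_list B))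
        (list_all (eval_bi \<sigma>) (bi_list B)) False"
| "ground_rule \<sigma> (MaxMap h j as phi) =
     GR (Some (inst_atom \<sigma> h)) (map (inst_atom \<sigma>) as) [] (list_all (eval_bi \<sigma>) phi) True"
| "ground_rule \<sigma> (MinMap h j as phi) =
     GR (Some (inst_atom \<sigma> h)) (map (inst_atom \<sigma>) as) [] (list_all (eval_bi \<sigma>) phi) True"

definition fact :: "('p,'c) gatom \<Rightarrow> ('p,'c) grule" where
  "fact a = GR (Some a) [] [] True False"

definition ground :: "('p,'c) gatom set \<Rightarrow> ('p,'c::linorder,'v) rule set \<Rightarrow> ('p,'c) grule set" where
  "ground D R = fact ` D \<union> {ground_rule \<sigma> r | \<sigma> r. r \<in> R}"

type_synonym ('p,'c) interp = "('p,'c) gatom set"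

definition body_true :: "('p,'c) interp \<Rightarrow> ('p,'c) grule \<Rightarrow> bool" where
  "body_true M g \<longleftrightarrow> gbi g \<and> set (gpos g) \<subseteq> M \<and> set (gneg g) \<inter> M = {}"

definition is_model :: "('p,'c) grule set \<Rightarrow> ('p,'c) interp \<Rightarrow> bool" where
  "is_model \<Pi> M \<longleftrightarrow> (\<forall>g\<in>\<Pi>. body_true M g \<longrightarrow> (case ghead g of None \<Rightarrow> False | Some h \<Rightarrow> h \<in> M))"

definition MM :: "('p,'c) grule set \<Rightarrow> ('p,'c) interp set" where
  "MM \<Pi> = {M. is_model \<Pi> M \<and> \<not> (\<exists>N. N \<subset> M \<and> is_model \<Pi> N)}"

definition drop_neg :: "('p,'c) grule \<Rightarrow> ('p,'c) grule" where
  "drop_neg g = GR (ghead g) (gpos g) [] (gbi g) (gmap g)"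

definition GL :: "('p,'c) grule set \<Rightarrow> ('p,'c) interp \<Rightarrow> ('p,'c) grule set" where
  "GL \<Pi> M = drop_neg ` {g\<in>\<Pi>. set (gneg g) \<inter> M = {}}"

definition SM :: "('p,'c) grule set \<Rightarrow> ('p,'c) interp set" where
  "SM \<Pi> = {M. M \<in> MM (GL \<Pi> M)}"

definition locally_consistent :: "('p,'c::linorder,'v) p2p \<Rightarrow> bool" where
  "locally_consistent PS \<longleftrightarrow>
     (\<forall>i\<in>peer_ids PS. let P = peer_of PS i in SM (ground (pD P) (pLP P \<union> pIC P)) \<noteq> {})"

definition ground_sys :: "('p,'c::linorder,'v) p2p \<Rightarrow> ('p,'c) grule set" where
  "ground_sys PS = ground (sysD PS) (sysLP PS \<union> sysMP PS \<union> sysIC PS)"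

definition sys_reduct :: "('p,'c) grule set \<Rightarrow> ('p,'c) interp \<Rightarrow> ('p,'c) grule set" where
  "sys_reduct \<Pi> M = drop_neg ` {g\<in>\<Pi>. set (gneg g) \<inter> M = {} \<and>
                                  (gmap g \<longrightarrow> (\<exists>h. ghead g = Some h \<and> h \<in> M))}"

definition St :: "('p,'c) grule set \<Rightarrow> ('p,'c) grule set" where
  "St \<Pi> = (\<lambda>g. GR (ghead g) (gpos g) (gneg g) (gbi g) False) ` \<Pi>"

definition weak_model :: "('p,'c::linorder,'v) p2p \<Rightarrow> ('p,'c) interp \<Rightarrow> bool" where
  "weak_model PS M \<longleftrightarrow> MM (St (sys_reduct (ground_sys PS) M)) = {M}"

definition restr_MP :: "('p,'c::linorder,'v) p2p \<Rightarrow> ('p,'c) interp \<Rightarrow> ('p,'c) interp" where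
  "restr_MP PS M = {a\<in>M. (gid a, gpred a) \<in> mapping_preds PS}"

definition MaxWM :: "('p,'c::linorder,'v) p2p \<Rightarrow> ('p,'c) interp set" where
  "MaxWM PS = {M. weak_model PS M \<and>
     \<not> (\<exists>N. weak_model PS N \<and> restr_MP PS N \<supseteq> restr_MP PS M \<and> \<not> restr_MP PS M \<supseteq> restr_MP PS N)}"

end

theory Submission
  imports Defs "HOL-Library.Disjoint_Sets"
begin

text \<open>Choose a stable model of every peer and take their union. The peers speak about disjoint
  sets of atoms, so the union is a minimal model of the union of the peers' Gelfond-Lifschitz
  reducts; the mapping rules that survive the reduct of the whole system have their heads in the
  union already, so it is a weak model. On the other hand every weak model is the least model of
  a positive program built from safe rules, hence lies in the finite set of ground atoms over
  the predicates and constants occurring in facts and rule heads. The mapping parts of the weak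
  models thus form a nonempty finite family of sets, which has a maximal member.\<close>

definition grule_atoms :: "('p,'c) grule \<Rightarrow> ('p,'c) gatom set" where
  "grule_atoms g = set_option (ghead g) \<union> set (gpos g) \<union> set (gneg g)"

definition positive_program :: "('p,'c) grule set \<Rightarrow> bool" where
  "positive_program P \<longleftrightarrow> (\<forall>g\<in>P. gneg g = [])"

definition closed_under :: "('p,'c) grule set \<Rightarrow> ('p,'c) gatom set \<Rightarrow> bool" where
  "closed_under P S \<longleftrightarrow> (\<forall>g\<in>P. gbi g \<and> set (gpos g) \<subseteq> S \<longrightarrow> set_option (ghead g) \<subseteq> S)"

lemma is_modelD:
  "is_model P M \<Longrightarrow> g \<in> P \<Longrightarrow> body_true M g \<Longrightarrow> \<exists>h. ghead g = Some h \<and> h \<in> M"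
  unfolding is_model_def by (auto split: option.splits)

lemma is_modelI:
  "(\<And>g. g \<in> P \<Longrightarrow> body_true M g \<Longrightarrow> \<exists>h. ghead g = Some h \<and> h \<in> M) \<Longrightarrow> is_model P M"
  unfolding is_model_def by (fastforce split: option.splits)

lemma is_model_subset: "is_model Q M \<Longrightarrow> P \<subseteq> Q \<Longrightarrow> is_model P M"
  unfolding is_model_def by blast

lemma MM_iff: "M \<in> MM P \<longleftrightarrow> is_model P M \<and> (\<forall>N\<subseteq>M. is_model P N \<longrightarrow> M \<subseteq> N)"
  unfolding MM_def by (auto simp: psubset_eq)

lemma MM_is_model: "M \<in> MM P \<Longrightarrow> is_model P M"
  by (simp add: MM_iff)

lemma MM_minimal: "M \<in> MM P \<Longrightarrow> N \<subseteq> M \<Longrightarrow> is_model P N \<Longrightarrow> M \<subseteq> N"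
  by (simp add: MM_iff)

lemma MM_subset_if_model_Int: "M \<in> MM P \<Longrightarrow> is_model P (M \<inter> S) \<Longrightarrow> M \<subseteq> S"
  using MM_minimal[of M P "M \<inter> S"] by blast

lemma MM_mono_program: "M \<in> MM P \<Longrightarrow> P \<subseteq> Q \<Longrightarrow> is_model Q M \<Longrightarrow> M \<in> MM Q"
  by (auto simp: MM_iff intro: is_model_subset)

lemma is_model_Int_alphabet:
  assumes atoms: "\<forall>g\<in>P. grule_atoms g \<subseteq> A" and M: "is_model P M"
  shows "is_model P (M \<inter> A)"
proof (rule is_modelI)
  fix g assume g: "g \<in> P" and body: "body_true (M \<inter> A) g"
  have A: "set (gneg g) \<subseteq> A" "set_option (ghead g) \<subseteq> A"
    using atoms g unfolding grule_atoms_def by auto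
  then have "body_true M g" using body unfolding body_true_def by blast
  then show "\<exists>h. ghead g = Some h \<and> h \<in> M \<inter> A" using is_modelD[OF M g] A(2) by auto
qed

lemma MM_subset_alphabet: "M \<in> MM P \<Longrightarrow> \<forall>g\<in>P. grule_atoms g \<subseteq> A \<Longrightarrow> M \<subseteq> A"
  by (simp add: MM_is_model MM_subset_if_model_Int is_model_Int_alphabet)

lemma UN_Int_disjoint_family:
  assumes "disjoint_family_on A I" and "\<And>j. j \<in> I \<Longrightarrow> M j \<subseteq> A j" and "i \<in> I"
  shows "(\<Union>j\<in>I. M j) \<inter> A i = M i"
proof
  show "(\<Union>j\<in>I. M j) \<inter> A i \<subseteq> M i"
  proof
    fix a assume "a \<in> (\<Union>j\<in>I. M j) \<inter> A i"
    then obtain j where j: "j \<in> I" "a \<in> M j" "a \<in> A i" by blast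
    then have "a \<in> A j \<inter> A i" using assms(2) by blast
    then have "j = i" using assms(1,3) j(1) unfolding disjoint_family_on_def by blast
    then show "a \<in> M i" using j(2) by simp
  qed
qed (use assms(2,3) in auto)

text \<open>Negative literals do no harm here, as they lie in the alphabet of their own rule.\<close>
lemma MM_UN_disjoint_alphabets:
  assumes MM: "\<And>i. i \<in> I \<Longrightarrow> M i \<in> MM (P i)"
    and atoms: "\<And>i. i \<in> I \<Longrightarrow> \<forall>g\<in>P i. grule_atoms g \<subseteq> A i"
    and disj: "disjoint_family_on A I"
  shows "(\<Union>i\<in>I. M i) \<in> MM (\<Union>i\<in>I. P i)"
proof -
  let ?M = "\<Union>i\<in>I. M i"
  have M_Int: "?M \<inter> A i = M i" if "i \<in> I" for i
    using UN_Int_disjoint_family[OF disj MM_subset_alphabet[OF MM atoms] that] .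
  have "is_model (\<Union>i\<in>I. P i) ?M"
  proof (rule is_modelI)
    fix g assume "g \<in> (\<Union>i\<in>I. P i)" and body: "body_true ?M g"
    then obtain i where i: "i \<in> I" and g: "g \<in> P i" by blast
    have "set (gpos g) \<subseteq> ?M \<inter> A i"
      using body atoms[OF i] g unfolding body_true_def grule_atoms_def by auto
    moreover have "M i \<subseteq> ?M" using i by blast
    ultimately have "body_true (M i) g"
      using body unfolding body_true_def M_Int[OF i] by auto
    then show "\<exists>h. ghead g = Some h \<and> h \<in> ?M"
      using is_modelD[OF MM_is_model[OF MM[OF i]] g] i by blast
  qed
  moreover have "?M \<subseteq> N" if N: "N \<subseteq> ?M" "is_model (\<Union>i\<in>I. P i) N" for N
  proof -
    have "M i \<subseteq> N" if i: "i \<in> I" for i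
    proof -
      have "is_model (P i) (N \<inter> A i)"
        using is_model_Int_alphabet[OF _ is_model_subset[OF N(2)]] atoms i by blast
      moreover have "N \<inter> A i \<subseteq> M i" using N(1) M_Int[OF i] by blast
      ultimately show ?thesis using MM_minimal[OF MM[OF i]] by blast
    qed
    then show ?thesis by blast
  qed
  ultimately show ?thesis by (simp add: MM_iff)
qed

lemma positive_program_body_true:
  "positive_program P \<Longrightarrow> g \<in> P \<Longrightarrow> body_true M g \<longleftrightarrow> gbi g \<and> set (gpos g) \<subseteq> M"
  unfolding positive_program_def body_true_def by simp

lemma closed_under_model: "positive_program P \<Longrightarrow> is_model P M \<Longrightarrow> closed_under P M"
  unfolding closed_under_def by (fastforce dest: is_modelD simp: positive_program_body_true)

lemma is_model_Int_closed:
  assumes pos: "positive_program P" and M: "is_model P M" and S: "closed_under P S"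
  shows "is_model P (M \<inter> S)"
proof (rule is_modelI)
  fix g assume g: "g \<in> P" and "body_true (M \<inter> S) g"
  then have "gbi g" "set (gpos g) \<subseteq> M" "set (gpos g) \<subseteq> S"
    using positive_program_body_true[OF pos g] by auto
  then show "\<exists>h. ghead g = Some h \<and> h \<in> M \<inter> S"
    using is_modelD[OF M g] positive_program_body_true[OF pos g] S g
    unfolding closed_under_def by fastforce
qed

lemma MM_subset_closed: "positive_program P \<Longrightarrow> M \<in> MM P \<Longrightarrow> closed_under P S \<Longrightarrow> M \<subseteq> S"
  by (simp add: MM_is_model MM_subset_if_model_Int is_model_Int_closed)

text \<open>A minimal model of a positive program is contained in every model; hence it is the
  only one.\<close>
lemma MM_positive_eq_singleton:
  assumes pos: "positive_program P" and M: "M \<in> MM P"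
  shows "MM P = {M}"
proof -
  have "N \<subseteq> N'" if "N \<in> MM P" "N' \<in> MM P" for N N'
    using MM_subset_closed[OF pos that(1) closed_under_model[OF pos MM_is_model[OF that(2)]]] .
  then show ?thesis using M by blast
qed

lemma positive_program_St_sys_reduct: "positive_program (St (sys_reduct P M))"
  unfolding positive_program_def St_def sys_reduct_def drop_neg_def by auto

lemma set_pos_list: "set (pos_list B) = pos_atoms B"
  unfolding pos_list_def pos_atoms_def by (induction B) (auto split: lit.splits)

lemma set_neg_list: "set (neg_list B) = neg_atoms B"
  unfolding neg_list_def neg_atoms_def by (induction B) (auto split: lit.splits)

lemma inst_atom_sel [simp]:
  "gid (inst_atom \<sigma> a) = aid a" "gpred (inst_atom \<sigma> a) = apred a"
  "gargs (inst_atom \<sigma> a) = map (inst_trm \<sigma>) (aargs a)"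
  by (simp_all add: inst_atom_def)

lemma grule_atoms_ground_rule: "grule_atoms (ground_rule \<sigma> r) = inst_atom \<sigma> ` rule_atoms r"
  by (cases r) (auto simp: grule_atoms_def set_pos_list set_neg_list)

lemma gmap_ground_rule: "gmap (ground_rule \<sigma> r) \<longleftrightarrow> is_mapping r"
  by (cases r) auto

lemma ground_mono: "D \<subseteq> D' \<Longrightarrow> R \<subseteq> R' \<Longrightarrow> ground D R \<subseteq> ground D' R'"
  unfolding ground_def by blast

lemma wf_system_peer: "wf_system PS \<Longrightarrow> i \<in> peer_ids PS \<Longrightarrow> wf_peer (length PS) i (peer_of PS i)"
  unfolding wf_system_def by blast

definition local_program :: "('p,'c::linorder,'v) p2p \<Rightarrow> nat \<Rightarrow> ('p,'c) grule set" where
  "local_program PS i = ground (pD (peer_of PS i)) (pLP (peer_of PS i) \<union> pIC (peer_of PS i))"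

lemma local_program_atoms:
  assumes wf: "wf_system PS" and i: "i \<in> peer_ids PS" and g: "g \<in> local_program PS i"
  shows "grule_atoms g \<subseteq> {a. gid a = i}" and "\<not> gmap g"
proof -
  have wfp: "wf_peer (length PS) i (peer_of PS i)" using wf_system_peer[OF wf i] .
  from g consider (fact) a where "a \<in> pD (peer_of PS i)" "g = fact a"
    | (rule) \<sigma> r where "r \<in> pLP (peer_of PS i) \<union> pIC (peer_of PS i)" "g = ground_rule \<sigma> r"
    unfolding local_program_def ground_def by blast
  then have "grule_atoms g \<subseteq> {a. gid a = i} \<and> \<not> gmap g"
  proof cases
    case fact
    then show ?thesis using wfp unfolding wf_peer_def fact_def grule_atoms_def by auto
  next
    case rule
    then have "(is_std r \<or> is_constr r) \<and> (\<forall>a\<in>rule_atoms r. aid a = i)"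
      using wfp unfolding wf_peer_def by blast
    then have "\<not> is_mapping r" and "\<forall>a\<in>rule_atoms r. aid a = i" by (cases r; auto)+
    then show ?thesis using rule by (auto simp: grule_atoms_ground_rule gmap_ground_rule)
  qed
  then show "grule_atoms g \<subseteq> {a. gid a = i}" and "\<not> gmap g" by auto
qed

lemma local_program_subset_ground_sys:
  "i \<in> peer_ids PS \<Longrightarrow> local_program PS i \<subseteq> ground_sys PS"
  unfolding local_program_def ground_sys_def sysD_def sysLP_def sysIC_def
  by (rule ground_mono) blast+

lemma ground_sys_non_mapping:
  assumes wf: "wf_system PS" and g: "g \<in> ground_sys PS" and nm: "\<not> gmap g"
  shows "\<exists>i\<in>peer_ids PS. g \<in> local_program PS i"
proof -
  from g consider (fact) a where "a \<in> sysD PS" "g = fact a"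
    | (local) \<sigma> r where "r \<in> sysLP PS \<union> sysIC PS" "g = ground_rule \<sigma> r"
    | (mapping) \<sigma> r where "r \<in> sysMP PS" "g = ground_rule \<sigma> r"
    unfolding ground_sys_def ground_def by blast
  then show ?thesis
  proof cases
    case fact
    then show ?thesis unfolding sysD_def local_program_def ground_def by blast
  next
    case local
    then show ?thesis unfolding sysLP_def sysIC_def local_program_def ground_def by blast
  next
    case mapping
    then obtain i where i: "i \<in> peer_ids PS" and "r \<in> pMP (peer_of PS i)"
      unfolding sysMP_def by blast
    then have "wf_mapping (length PS) i r" using wf_system_peer[OF wf i] unfolding wf_peer_def by blast
    then have "is_mapping r" by (cases r) auto
    then show ?thesis using mapping nm by (simp add: gmap_ground_rule)
  qed
qed

lemma St_sys_reduct_eq: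
  "St (sys_reduct P M) = (\<lambda>g. GR (ghead g) (gpos g) [] (gbi g) False) `
     {g\<in>P. set (gneg g) \<inter> M = {} \<and> (gmap g \<longrightarrow> (\<exists>h. ghead g = Some h \<and> h \<in> M))}"
  unfolding St_def sys_reduct_def image_image drop_neg_def by simp

lemma grule_atoms_drop_neg: "grule_atoms (drop_neg g) \<subseteq> grule_atoms g"
  unfolding grule_atoms_def drop_neg_def by auto

lemma mem_GL: "g' \<in> GL P M \<longleftrightarrow> (\<exists>g\<in>P. set (gneg g) \<inter> M = {} \<and> g' = drop_neg g)"
  unfolding GL_def by blast

lemma GL_local_program_restrict:
  assumes wf: "wf_system PS" and i: "i \<in> peer_ids PS"
  shows "GL (local_program PS i) (M \<inter> {a. gid a = i}) = GL (local_program PS i) M"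
proof -
  have "set (gneg g) \<inter> (M \<inter> {a. gid a = i}) = set (gneg g) \<inter> M" if "g \<in> local_program PS i" for g
    using local_program_atoms(1)[OF wf i that] unfolding grule_atoms_def by blast
  then have "{g \<in> local_program PS i. set (gneg g) \<inter> (M \<inter> {a. gid a = i}) = {}} =
             {g \<in> local_program PS i. set (gneg g) \<inter> M = {}}" by blast
  then show ?thesis unfolding GL_def by simp
qed

lemma GL_local_program_subset_St_sys_reduct:
  assumes wf: "wf_system PS" and i: "i \<in> peer_ids PS"
  shows "GL (local_program PS i) M \<subseteq> St (sys_reduct (ground_sys PS) M)"
proof
  fix g' assume "g' \<in> GL (local_program PS i) M"
  then obtain g where g: "g \<in> local_program PS i" and neg: "set (gneg g) \<inter> M = {}"
    and g': "g' = drop_neg g"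
    by (auto simp: mem_GL)
  have nm: "\<not> gmap g" using local_program_atoms(2)[OF wf i g] .
  have "g \<in> {g \<in> ground_sys PS. set (gneg g) \<inter> M = {} \<and>
               (gmap g \<longrightarrow> (\<exists>h. ghead g = Some h \<and> h \<in> M))}"
    using local_program_subset_ground_sys[OF i] g neg nm by blast
  moreover have "g' = GR (ghead g) (gpos g) [] (gbi g) False"
    using g' nm by (simp add: drop_neg_def)
  ultimately show "g' \<in> St (sys_reduct (ground_sys PS) M)"
    unfolding St_sys_reduct_eq by (rule image_eqI[rotated])
qed

lemma St_sys_reduct_cases:
  assumes wf: "wf_system PS" and g': "g' \<in> St (sys_reduct (ground_sys PS) M)"
  shows "(\<exists>i\<in>peer_ids PS. g' \<in> GL (local_program PS i) M) \<or> (\<exists>h. ghead g' = Some h \<and> h \<in> M)"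
proof -
  obtain g where g: "g \<in> ground_sys PS" and neg: "set (gneg g) \<inter> M = {}"
    and map: "gmap g \<longrightarrow> (\<exists>h. ghead g = Some h \<and> h \<in> M)"
    and g': "g' = GR (ghead g) (gpos g) [] (gbi g) False"
    using g' unfolding St_sys_reduct_eq by blast
  show ?thesis
  proof (cases "gmap g")
    case True
    then show ?thesis using map g' by simp
  next
    case False
    then obtain i where i: "i \<in> peer_ids PS" and gi: "g \<in> local_program PS i"
      using ground_sys_non_mapping[OF wf g] by blast
    have "g' = drop_neg g" using g' False unfolding drop_neg_def by simp
    then have "g' \<in> GL (local_program PS i) M" using gi neg unfolding mem_GL by blast
    then show ?thesis using i by blast
  qed
qed

lemma weak_model_UN_stable_models:
  assumes wf: "wf_system PS" and SM: "\<And>i. i \<in> peer_ids PS \<Longrightarrow> M i \<in> SM (local_program PS i)"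
  shows "weak_model PS (\<Union>i\<in>peer_ids PS. M i)"
proof -
  let ?I = "peer_ids PS" and ?A = "\<lambda>i. {a. gid a = i}" and ?M = "\<Union>i\<in>peer_ids PS. M i"
  let ?P = "\<lambda>X i. GL (local_program PS i) X" and ?Q = "St (sys_reduct (ground_sys PS) ?M)"
  have MM_P: "M i \<in> MM (?P (M i) i)" if "i \<in> ?I" for i using SM[OF that] unfolding SM_def by blast
  have atoms: "\<forall>g\<in>?P X i. grule_atoms g \<subseteq> ?A i" if i: "i \<in> ?I" for i X
    using local_program_atoms(1)[OF wf i] grule_atoms_drop_neg unfolding GL_def by blast
  have disj: "disjoint_family_on ?A ?I" unfolding disjoint_family_on_def by blast
  have "?P (M i) i = ?P ?M i" if i: "i \<in> ?I" for i
    using UN_Int_disjoint_family[OF disj MM_subset_alphabet[OF MM_P atoms] i]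
      GL_local_program_restrict[OF wf i, of ?M] by simp
  then have MM_UN: "?M \<in> MM (\<Union>i\<in>?I. ?P ?M i)"
    using MM_UN_disjoint_alphabets[OF MM_P atoms disj] by simp
  have "is_model ?Q ?M"
  proof (rule is_modelI)
    fix g' assume "g' \<in> ?Q" and "body_true ?M g'"
    then show "\<exists>h. ghead g' = Some h \<and> h \<in> ?M"
      using St_sys_reduct_cases[OF wf] is_modelD[OF MM_is_model[OF MM_UN]] by blast
  qed
  moreover have "(\<Union>i\<in>?I. ?P ?M i) \<subseteq> ?Q"
    using GL_local_program_subset_St_sys_reduct[OF wf] by blast
  ultimately have "?M \<in> MM ?Q" using MM_mono_program[OF MM_UN] by blast
  then show ?thesis
    unfolding weak_model_def by (rule MM_positive_eq_singleton[OF positive_program_St_sys_reduct])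
qed

lemma weak_model_exists:
  assumes "wf_system PS" and "locally_consistent PS"
  shows "\<exists>M. weak_model PS M"
proof -
  have "\<forall>i\<in>peer_ids PS. \<exists>M. M \<in> SM (local_program PS i)"
    using assms(2) unfolding locally_consistent_def local_program_def Let_def by blast
  then obtain M where "\<And>i. i \<in> peer_ids PS \<Longrightarrow> M i \<in> SM (local_program PS i)" by metis
  then show ?thesis using weak_model_UN_stable_models[OF assms(1)] by blast
qed

fun rule_head :: "('p,'c,'v) rule \<Rightarrow> ('p,'c,'v) atom option" where
  "rule_head (Std h _) = Some h"
| "rule_head (Constr _) = None"
| "rule_head (MaxMap h _ _ _) = Some h"
| "rule_head (MinMap h _ _ _) = Some h"

fun rule_pos :: "('p,'c,'v) rule \<Rightarrow> ('p,'c,'v) atom list" where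
  "rule_pos (Std _ B) = pos_list B"
| "rule_pos (Constr B) = pos_list B"
| "rule_pos (MaxMap _ _ as _) = as"
| "rule_pos (MinMap _ _ as _) = as"

lemma ghead_ground_rule: "ghead (ground_rule \<sigma> r) = map_option (inst_atom \<sigma>) (rule_head r)"
  by (cases r) auto

lemma gpos_ground_rule: "gpos (ground_rule \<sigma> r) = map (inst_atom \<sigma>) (rule_pos r)"
  by (cases r) auto

lemma safe_head_vars:
  "safe r \<Longrightarrow> rule_head r = Some h \<Longrightarrow> vars_atom h \<subseteq> (\<Union>a\<in>set (rule_pos r). vars_atom a)"
  by (cases r) (auto simp: set_pos_list)

lemma vars_trm_iff: "v \<in> vars_trm t \<longleftrightarrow> t = Var v"
  by (cases t) auto

lemma mem_vars_atom: "v \<in> vars_atom a \<longleftrightarrow> Var v \<in> set (aargs a)"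
  unfolding vars_atom_def by (simp add: vars_trm_iff)

definition head_atoms :: "('p,'c,'v) rule set \<Rightarrow> ('p,'c,'v) atom set" where
  "head_atoms R = (\<Union>r\<in>R. set_option (rule_head r))"

definition program_consts :: "('p,'c) gatom set \<Rightarrow> ('p,'c,'v) rule set \<Rightarrow> 'c set" where
  "program_consts D R = (\<Union>a\<in>D. set (gargs a)) \<union> (\<Union>h\<in>head_atoms R. Const -` set (aargs h))"

definition atom_shapes :: "('p,'c) gatom set \<Rightarrow> ('p,'c,'v) rule set \<Rightarrow> (nat \<times> 'p \<times> nat) set" where
  "atom_shapes D R = (\<lambda>a. (gid a, gpred a, length (gargs a))) ` D \<union>
                     (\<lambda>h. (aid h, apred h, length (aargs h))) ` head_atoms R"

definition herbrand_base :: "('p,'c) gatom set \<Rightarrow> ('p,'c,'v) rule set \<Rightarrow> ('p,'c) gatom set" where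
  "herbrand_base D R =
     (\<Union>(i, p, n)\<in>atom_shapes D R. GAtom i p ` {xs. set xs \<subseteq> program_consts D R \<and> length xs = n})"

lemma mem_herbrand_base:
  "a \<in> herbrand_base D R \<longleftrightarrow>
     (gid a, gpred a, length (gargs a)) \<in> atom_shapes D R \<and> set (gargs a) \<subseteq> program_consts D R"
  by (cases a) (auto simp: herbrand_base_def)

lemma finite_herbrand_base:
  assumes "finite D" and "finite R"
  shows "finite (herbrand_base D R)"
proof -
  have "finite (head_atoms R)" using assms(2) unfolding head_atoms_def by simp
  moreover have "finite (Const -` set (aargs h))" if "h \<in> head_atoms R" for h
    by (rule finite_vimageI) (auto simp: inj_def)
  ultimately have "finite (program_consts D R)" and "finite (atom_shapes D R)"
    using assms(1) unfolding program_consts_def atom_shapes_def by auto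
  then show ?thesis unfolding herbrand_base_def by (auto intro: finite_lists_length_eq)
qed

lemma facts_subset_herbrand_base: "D \<subseteq> herbrand_base D R"
  unfolding mem_herbrand_base atom_shapes_def program_consts_def subset_iff by blast

lemma inst_head_mem_herbrand_base:
  assumes h: "h \<in> head_atoms R" and vars: "vars_atom h \<subseteq> (\<Union>a\<in>set as. vars_atom a)"
    and body: "inst_atom \<sigma> ` set as \<subseteq> herbrand_base D R"
  shows "inst_atom \<sigma> h \<in> herbrand_base D R"
proof -
  have "inst_trm \<sigma> t \<in> program_consts D R" if t: "t \<in> set (aargs h)" for t
  proof (cases t)
    case (Const c)
    then show ?thesis using t h unfolding program_consts_def by auto
  next
    case (Var v)
    then have "v \<in> vars_atom h" using t by (simp add: mem_vars_atom)
    then obtain a where a: "a \<in> set as" and "Var v \<in> set (aargs a)"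
      using vars by (auto simp: mem_vars_atom)
    then have "\<sigma> v \<in> set (gargs (inst_atom \<sigma> a))"
      using imageI[of "Var v" _ "inst_trm \<sigma>"] by simp
    moreover have "inst_atom \<sigma> a \<in> herbrand_base D R" using body a by blast
    ultimately show ?thesis using Var unfolding mem_herbrand_base by auto
  qed
  then show ?thesis using h unfolding mem_herbrand_base atom_shapes_def by auto
qed

lemma closed_under_ground_herbrand_base:
  assumes "\<forall>r\<in>R. safe r"
  shows "closed_under (ground D R) (herbrand_base D R)"
  unfolding closed_under_def
proof (intro ballI impI)
  fix g assume g: "g \<in> ground D R" and "gbi g \<and> set (gpos g) \<subseteq> herbrand_base D R"
  then have pos: "set (gpos g) \<subseteq> herbrand_base D R" by blast
  from g consider (fact) a where "a \<in> D" "g = fact a"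
    | (rule) \<sigma> r where "r \<in> R" "g = ground_rule \<sigma> r"
    unfolding ground_def by blast
  then show "set_option (ghead g) \<subseteq> herbrand_base D R"
  proof cases
    case fact
    then show ?thesis using facts_subset_herbrand_base unfolding fact_def by fastforce
  next
    case rule
    show ?thesis
    proof
      fix a assume "a \<in> set_option (ghead g)"
      then obtain h where h: "rule_head r = Some h" and a: "a = inst_atom \<sigma> h"
        using rule(2) by (auto simp: ghead_ground_rule)
      have "h \<in> head_atoms R" using rule(1) h unfolding head_atoms_def by force
      moreover have "vars_atom h \<subseteq> (\<Union>b\<in>set (rule_pos r). vars_atom b)"
        using safe_head_vars assms rule(1) h by blast
      moreover have "inst_atom \<sigma> ` set (rule_pos r) \<subseteq> herbrand_base D R"
        using pos rule(2) by (simp add: gpos_ground_rule)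
      ultimately show "a \<in> herbrand_base D R" using a inst_head_mem_herbrand_base by blast
    qed
  qed
qed

lemma closed_under_St_sys_reduct: "closed_under P S \<Longrightarrow> closed_under (St (sys_reduct P M)) S"
  unfolding closed_under_def St_sys_reduct_eq by auto

definition sys_rules :: "('p,'c::linorder,'v) p2p \<Rightarrow> ('p,'c,'v) rule set" where
  "sys_rules PS = sysLP PS \<union> sysMP PS \<union> sysIC PS"

lemma wf_system_finite:
  assumes "wf_system PS"
  shows "finite (sysD PS)" and "finite (sys_rules PS)"
proof -
  have "finite (peer_ids PS)" unfolding peer_ids_def by simp
  moreover have "\<forall>i\<in>peer_ids PS. wf_peer (length PS) i (peer_of PS i)"
    using wf_system_peer[OF assms] by blast
  ultimately show "finite (sysD PS)" and "finite (sys_rules PS)"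
    unfolding sysD_def sys_rules_def sysLP_def sysMP_def sysIC_def wf_peer_def by auto
qed

lemma wf_system_safe: "wf_system PS \<Longrightarrow> \<forall>r\<in>sys_rules PS. safe r"
  unfolding sys_rules_def sysLP_def sysMP_def sysIC_def
  using wf_system_peer unfolding wf_peer_def by blast

lemma weak_model_subset_herbrand_base:
  assumes "wf_system PS" and "weak_model PS M"
  shows "M \<subseteq> herbrand_base (sysD PS) (sys_rules PS)"
proof (rule MM_subset_closed)
  show "M \<in> MM (St (sys_reduct (ground_sys PS) M))"
    using assms(2) unfolding weak_model_def by simp
  show "closed_under (St (sys_reduct (ground_sys PS) M)) (herbrand_base (sysD PS) (sys_rules PS))"
    unfolding ground_sys_def sys_rules_def[symmetric]
    by (intro closed_under_St_sys_reduct closed_under_ground_herbrand_base wf_system_safe assms(1))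
qed (rule positive_program_St_sys_reduct)

lemma ex_maximal_image_finite:
  assumes "Q x" and "finite F" and "\<And>x. Q x \<Longrightarrow> f x \<subseteq> F"
  shows "\<exists>x. Q x \<and> \<not> (\<exists>y. Q y \<and> f x \<subset> f y)"
proof -
  have "finite (f ` Collect Q)" using assms(2,3) by (auto intro: finite_subset[of _ "Pow F"])
  then obtain m where "m \<in> f ` Collect Q" and "\<forall>b\<in>f ` Collect Q. m \<subseteq> b \<longrightarrow> m = b"
    using finite_has_maximal2[of "f ` Collect Q" "f x"] assms(1) by blast
  then show ?thesis by blast
qed

theorem theorem1:
  fixes PS :: "('p,'c::linorder,'v) p2p"
  assumes "wf_system PS"
    and "maximal_system PS"
    and "locally_consistent PS"
  shows "MaxWM PS \<noteq> {}"
proof -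
  let ?B = "herbrand_base (sysD PS) (sys_rules PS)"
  obtain M0 where M0: "weak_model PS M0" using weak_model_exists[OF assms(1,3)] by blast
  have finite: "finite ?B"
    using finite_herbrand_base wf_system_finite[OF assms(1)] by blast
  have bounded: "restr_MP PS M \<subseteq> ?B" if "weak_model PS M" for M
    using weak_model_subset_herbrand_base[OF assms(1) that] unfolding restr_MP_def by blast
  obtain M where "weak_model PS M"
    and "\<not> (\<exists>N. weak_model PS N \<and> restr_MP PS M \<subset> restr_MP PS N)"
    using ex_maximal_image_finite[of "weak_model PS" M0 ?B "restr_MP PS", OF M0 finite bounded]
    by blast
  then have "M \<in> MaxWM PS" unfolding MaxWM_def by blast
  then show ?thesis by blast
qed

end
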